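(* Let $X$ be a Tychonoff space and let $x_0,y_0\in X$ be points that are not $P$-points of $X$. Then there exist a Tychonoff space $Y$ and an $\mathbb R$-quotient map $f\colon X\to Y$ such that $Y$ is a subset of $\mathbb R$ endowed with a topology finer than the one induced by the Euclidean metric, and $f(x_0)$ and $f(y_0)$ are not $P$-points of $Y$. Moreover, if $x_0\ne y_0$, then $f$ can be chosen so that $f(x_0)<f(y_0)$.
   Context: A point $x$ of a space is a $P$-point if every $G_\delta$-set containing $x$ is a neighborhood of $x$. A continuous surjection $p\colon X\to Y$ between topological spaces is $\mathbb R$-quotient if for every function $\varphi\colon Y\to\mathbb R$, $\varphi$ is continuous if and only if $\varphi\circ p$ is continuous; equivalently, the topology of $Y$ is the finest completely regular topology making $p$ continuous. *)

theory Defs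
  imports "HOL-Analysis.Analysis"
begin

definition tychonoff_space :: "'a topology \<Rightarrow> bool" where
  "tychonoff_space X \<longleftrightarrow> completely_regular_space X \<and> t1_space X"

definition p_point :: "'a topology \<Rightarrow> 'a \<Rightarrow> bool" where
  "p_point X x \<longleftrightarrow> x \<in> topspace X \<and>
     (\<forall>G. gdelta_in X G \<and> x \<in> G \<longrightarrow> (\<exists>U. openin X U \<and> x \<in> U \<and> U \<subseteq> G))"

definition real_quotient_map :: "'a topology \<Rightarrow> 'b topology \<Rightarrow> ('a \<Rightarrow> 'b) \<Rightarrow> bool" where
  "real_quotient_map X Y p \<longleftrightarrow> continuous_map X Y p \<and> p ` topspace X = topspace Y \<and>
     (\<forall>\<phi> :: 'b \<Rightarrow> real. continuous_map Y euclideanreal \<phi> \<longleftrightarrow>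
        continuous_map X euclideanreal (\<phi> \<circ> p))"

end

theory Submission
  imports Defs
begin

text \<open>A point fails to be a P-point exactly when some zero set of a continuous
  \<open>g : X \<rightarrow> [0,1]\<close> contains it without being a neighbourhood of it. Gluing the
  functions for \<open>x\<^sub>0\<close> and \<open>y\<^sub>0\<close> along an Urysohn function separating the two points
  yields a continuous \<open>h : X \<rightarrow> \<real>\<close> with \<open>h x\<^sub>0 = 0\<close>, \<open>h y\<^sub>0 = 1\<close>, whose fibres through
  \<open>x\<^sub>0\<close> and \<open>y\<^sub>0\<close> lie in those zero sets. Equip \<open>h[X]\<close> with the initial topology of all
  \<open>\<phi> : \<real> \<rightarrow> \<real>\<close> for which \<open>\<phi> \<circ> h\<close> is continuous: it is completely regular, finer than
  the Euclidean topology (so points are G\<open>\<delta>\<close>), and turns \<open>h\<close> into an \<open>\<real>\<close>-quotient map.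
  A P-point whose singleton is G\<open>\<delta>\<close> is isolated, and an isolated value of \<open>h\<close> has an
  open fibre in \<open>X\<close>.\<close>

lemma p_point_iff_interior_of:
  "p_point X x \<longleftrightarrow> x \<in> topspace X \<and> (\<forall>G. gdelta_in X G \<and> x \<in> G \<longrightarrow> x \<in> X interior_of G)"
  by (auto simp: p_point_def interior_of_def)

lemma p_point_imp_openin_singleton:
  assumes "p_point X x" "gdelta_in X {x}"
  shows "openin X {x}"
  using assms interior_of_subset[of X "{x}"]
  by (metis p_point_iff_interior_of insertI1 interior_of_eq subset_singleton_iff empty_iff)

lemma gdelta_in_expansive:
  assumes "topspace Y = topspace X" "\<And>U. openin X U \<Longrightarrow> openin Y U" "gdelta_in X S"
  shows "gdelta_in Y S"
  using assms unfolding gdelta_in_alt by (metis intersection_of_mono)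

lemma gdelta_in_contains_zero_set:
  assumes cr: "completely_regular_space X" and G: "gdelta_in X G" "x \<in> G"
  obtains g :: "'a \<Rightarrow> real" where "continuous_map X (top_of_set {0..1}) g" "g x = 0"
    "{y \<in> topspace X. g y = 0} \<subseteq> G"
proof -
  obtain C :: "nat \<Rightarrow> 'a set" where C: "\<And>n. openin X (C n)" "\<Inter>(range C) = G"
    using G(1) unfolding gdelta_in_descending by blast
  have "\<forall>n. \<exists>f. continuous_map X (top_of_set {0..1::real}) f \<and> f x = 0 \<and> f ` (topspace X - C n) \<subseteq> {1}"
    (is "\<forall>n. ?separates n")
  proof
    fix n
    have "closedin X (topspace X - C n)"
      using C(1) by blast
    moreover have "x \<in> topspace X - (topspace X - C n)"
      using C(2) G(2) gdelta_in_subset[OF G(1)] by blast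
    ultimately show "?separates n"
      using cr unfolding completely_regular_space_def by blast
  qed
  then obtain f :: "nat \<Rightarrow> 'a \<Rightarrow> real"
    where f01: "\<And>n. continuous_map X (top_of_set {0..1}) (f n)"
      and f: "\<And>n. f n x = 0" "\<And>n. f n ` (topspace X - C n) \<subseteq> {1}"
    by metis
  define F where "F y = (\<lambda>n. f n y)" for y
  define g where "g y = min (dist (F y) (\<lambda>_. 0)) 1" for y
  \<comment> \<open>The metric of \<open>\<real>\<^sup>\<nat>\<close> combines countably many functions: \<open>g y = 0\<close> iff all \<open>f n y = 0\<close>.\<close>
  have "continuous_map X euclideanreal (f n)" for n
    using f01 by (simp add: continuous_map_in_subtopology)
  then have contF: "continuous_map X euclidean F"
    unfolding euclidean_product_topology[symmetric] continuous_map_componentwise_UNIV F_def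
    by simp
  have "continuous_map euclidean euclideanreal (\<lambda>t::nat \<Rightarrow> real. dist t (\<lambda>_. 0))"
    by (simp add: continuous_on_dist)
  from continuous_map_compose[OF contF this]
  have "continuous_map X euclideanreal (\<lambda>y. dist (F y) (\<lambda>_. 0))"
    by (simp add: o_def)
  then have "continuous_map X euclideanreal g"
    unfolding g_def by (intro continuous_map_real_min) auto
  then have "continuous_map X (top_of_set {0..1}) g"
    by (auto simp: continuous_map_in_subtopology g_def)
  moreover have "g x = 0"
    by (simp add: g_def F_def f(1))
  moreover have "{y \<in> topspace X. g y = 0} \<subseteq> G"
  proof clarify
    fix y assume y: "y \<in> topspace X" "g y = 0"
    then have "F y = (\<lambda>_. 0)"
      by (simp add: g_def min_def split: if_splits)
    then have "f n y = 0" for n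
      by (metis F_def)
    then have "y \<in> C n" for n
      using f(2)[of n] y(1) by force
    then show "y \<in> G" using C(2) by blast
  qed
  ultimately show ?thesis using that by blast
qed

lemma not_p_point_imp_zero_set:
  assumes "completely_regular_space X" "x \<in> topspace X" "\<not> p_point X x"
  obtains g :: "'a \<Rightarrow> real" where "continuous_map X (top_of_set {0..1}) g" "g x = 0"
    "x \<notin> X interior_of {y \<in> topspace X. g y = 0}"
proof -
  obtain G where G: "gdelta_in X G" "x \<in> G" "x \<notin> X interior_of G"
    using assms(2,3) unfolding p_point_iff_interior_of by blast
  obtain g :: "'a \<Rightarrow> real" where "continuous_map X (top_of_set {0..1}) g" "g x = 0"
    "{y \<in> topspace X. g y = 0} \<subseteq> G"
    using gdelta_in_contains_zero_set[OF assms(1) G(1,2)] .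
  then show ?thesis
    using that G(3) interior_of_mono by blast
qed

lemma completely_regular_space_pullback_topology:
  fixes e :: "'a \<Rightarrow> 'b"
  assumes "completely_regular_space P"
  shows "completely_regular_space (pullback_topology S e P)"
  unfolding completely_regular_space_alt'
proof (intro allI impI)
  fix W y
  assume "openin (pullback_topology S e P) W" and "y \<in> W"
  then obtain U where U: "openin P U" "W = e -` U \<inter> S" "e y \<in> U"
    by (auto simp: openin_pullback_topology)
  then obtain f :: "'b \<Rightarrow> real"
    where f: "continuous_map P euclideanreal f" "f (e y) = 0" "f ` (topspace P - U) \<subseteq> {1}"
    using assms unfolding completely_regular_space_alt' by blast
  show "\<exists>f. continuous_map (pullback_topology S e P) euclideanreal f \<and> f y = 0 \<and>
            f ` (topspace (pullback_topology S e P) - W) \<subseteq> {1}"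
  proof (intro exI conjI)
    show "continuous_map (pullback_topology S e P) euclideanreal (f \<circ> e)"
      using f(1) by (rule continuous_map_pullback)
    show "(f \<circ> e) ` (topspace (pullback_topology S e P) - W) \<subseteq> {1}"
      using f(3) U(2) by (auto simp: topspace_pullback_topology)
  qed (simp add: f(2))
qed

definition real_quotient_topology :: "'a topology \<Rightarrow> ('a \<Rightarrow> real) \<Rightarrow> real topology" where
  "real_quotient_topology X h =
     pullback_topology (h ` topspace X)
       (\<lambda>y. \<lambda>\<phi>\<in>{\<phi>. continuous_map X euclideanreal (\<phi> \<circ> h)}. \<phi> y)
       (product_topology (\<lambda>_. euclideanreal) {\<phi>. continuous_map X euclideanreal (\<phi> \<circ> h)})"

lemma topspace_real_quotient_topology [simp]:
  "topspace (real_quotient_topology X h) = h ` topspace X"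
  by (auto simp: real_quotient_topology_def topspace_pullback_topology)

lemma continuous_map_real_quotient_topology:
  "continuous_map X (real_quotient_topology X h) h"
  unfolding real_quotient_topology_def
  by (rule continuous_map_pullback') (auto simp: continuous_map_componentwise o_def)

lemma continuous_map_real_quotient_topology_iff:
  "continuous_map (real_quotient_topology X h) euclideanreal \<phi> \<longleftrightarrow>
   continuous_map X euclideanreal (\<phi> \<circ> h)"
proof
  assume "continuous_map (real_quotient_topology X h) euclideanreal \<phi>"
  then show "continuous_map X euclideanreal (\<phi> \<circ> h)"
    using continuous_map_compose[OF continuous_map_real_quotient_topology] by blast
next
  assume \<phi>: "continuous_map X euclideanreal (\<phi> \<circ> h)"
  have "continuous_map (real_quotient_topology X h) euclideanreal
          ((\<lambda>t. t \<phi>) \<circ> (\<lambda>y. \<lambda>\<psi>\<in>{\<psi>. continuous_map X euclideanreal (\<psi> \<circ> h)}. \<psi> y))"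
    unfolding real_quotient_topology_def
    by (intro continuous_map_pullback continuous_map_product_projection) (simp add: \<phi>)
  then show "continuous_map (real_quotient_topology X h) euclideanreal \<phi>"
    by (rule continuous_map_eq) (simp add: \<phi>)
qed

lemma real_quotient_map_real_quotient_topology:
  "real_quotient_map X (real_quotient_topology X h) h"
  by (simp add: real_quotient_map_def continuous_map_real_quotient_topology
      continuous_map_real_quotient_topology_iff)

lemma completely_regular_space_real_quotient_topology:
  "completely_regular_space (real_quotient_topology X h)"
  unfolding real_quotient_topology_def
  by (intro completely_regular_space_pullback_topology)
    (simp add: completely_regular_space_product_topology metrizable_imp_completely_regular_space
      metrizable_space_euclidean)

lemma openin_real_quotient_topology:
  assumes h: "continuous_map X euclideanreal h"
    and U: "openin (subtopology euclideanreal (h ` topspace X)) U"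
  shows "openin (real_quotient_topology X h) U"
proof -
  have "continuous_map (real_quotient_topology X h) euclideanreal id"
    using h by (simp add: continuous_map_real_quotient_topology_iff)
  then have "continuous_map (real_quotient_topology X h) (subtopology euclideanreal (h ` topspace X)) id"
    by (simp add: continuous_map_in_subtopology)
  from openin_continuous_map_preimage[OF this U] show ?thesis
    using openin_subset[OF U] by (simp add: Collect_conj_eq Int_absorb1 Collect_mem_eq)
qed

lemma tychonoff_space_real_quotient_topology:
  assumes "continuous_map X euclideanreal h"
  shows "tychonoff_space (real_quotient_topology X h)"
  unfolding tychonoff_space_def
proof
  show "t1_space (real_quotient_topology X h)"
    by (rule t1_space_expansive[of _ "subtopology euclideanreal (h ` topspace X)"])
      (simp_all add: openin_real_quotient_topology[OF assms] t1_space_subtopology t1_space_euclidean)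
qed (rule completely_regular_space_real_quotient_topology)

lemma not_p_point_real_quotient_topology:
  assumes h: "continuous_map X euclideanreal h" and x: "x \<in> topspace X"
    and fibre: "{y \<in> topspace X. h y = h x} \<subseteq> Z" and not_nhd: "x \<notin> X interior_of Z"
  shows "\<not> p_point (real_quotient_topology X h) (h x)"
proof
  assume p: "p_point (real_quotient_topology X h) (h x)"
  have "closedin (subtopology euclideanreal (h ` topspace X)) {h x}"
    using x by (simp add: closedin_subtopology_refl)
  then have "gdelta_in (subtopology euclideanreal (h ` topspace X)) {h x}"
    by (intro closed_imp_gdelta_in metrizable_space_subtopology metrizable_space_euclidean)
  then have "gdelta_in (real_quotient_topology X h) {h x}"
    by (rule gdelta_in_expansive[rotated 2]) (simp_all add: openin_real_quotient_topology[OF h])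
  with p have "openin (real_quotient_topology X h) {h x}"
    by (rule p_point_imp_openin_singleton)
  then have "openin X {y \<in> topspace X. h y \<in> {h x}}"
    by (rule openin_continuous_map_preimage[OF continuous_map_real_quotient_topology])
  then have "x \<in> X interior_of Z"
    using x fibre interior_of_maximal by fastforce
  with not_nhd show False ..
qed

lemma interpolation_level_sets:
  fixes t a b :: real
  assumes "t \<in> {0..1}" "a \<in> {0..1}" "b \<in> {0..1}"
  shows "(1 - t) * (a / 2) + t * (1 - b / 2) = 0 \<Longrightarrow> a = 0"
    and "(1 - t) * (a / 2) + t * (1 - b / 2) = 1 \<Longrightarrow> b = 0"
proof -
  assume "(1 - t) * (a / 2) + t * (1 - b / 2) = 0"
  moreover have "0 \<le> (1 - t) * (a / 2)" "0 \<le> t * (1 - b / 2)"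
    using assms by auto
  ultimately have "(1 - t) * (a / 2) = 0" "t * (1 - b / 2) = 0"
    by linarith+
  then show "a = 0"
    using assms(3) by auto
next
  assume "(1 - t) * (a / 2) + t * (1 - b / 2) = 1"
  then have "t * (b / 2) + (1 - t) * (1 - a / 2) = 0"
    by (simp add: algebra_simps)
  moreover have "0 \<le> t * (b / 2)" "0 \<le> (1 - t) * (1 - a / 2)"
    using assms by auto
  ultimately have "t * (b / 2) = 0" "(1 - t) * (1 - a / 2) = 0"
    by linarith+
  then show "b = 0"
    using assms(2) by auto
qed

lemma interpolate_zero_sets:
  fixes g k :: "'a \<Rightarrow> real"
  assumes "tychonoff_space X" "x0 \<in> topspace X" "y0 \<in> topspace X"
    and g: "continuous_map X (top_of_set {0..1}) g" "g x0 = 0"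
    and k: "continuous_map X (top_of_set {0..1}) k" "k y0 = 0"
  obtains h where "continuous_map X euclideanreal h" "h x0 = 0" "x0 \<noteq> y0 \<Longrightarrow> h y0 = 1"
    "{x \<in> topspace X. h x = 0} \<subseteq> {x \<in> topspace X. g x = 0}"
    "{x \<in> topspace X. h x = 1} \<subseteq> {x \<in> topspace X. k x = 0}"
proof -
  obtain u :: "'a \<Rightarrow> real"
    where u: "continuous_map X (top_of_set {0..1}) u" "u x0 = 0" "x0 \<noteq> y0 \<Longrightarrow> u y0 = 1"
  proof (cases "x0 = y0")
    case True
    then show ?thesis
      using that[of "\<lambda>_. 0"] by simp
  next
    case False
    then have "closedin X {y0}" "x0 \<in> topspace X - {y0}"
      using assms(1-3) by (auto simp: tychonoff_space_def t1_space_closedin_singleton)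
    then show ?thesis
      using assms(1) that unfolding tychonoff_space_def completely_regular_space_def by blast
  qed
  \<comment> \<open>Halving \<open>g\<close> and \<open>k\<close> keeps the two ends apart: \<open>h x = 0\<close> forces \<open>u x = 0\<close>, \<open>h x = 1\<close> forces \<open>u x = 1\<close>.\<close>
  define h where "h x = (1 - u x) * (g x / 2) + u x * (1 - k x / 2)" for x
  have range: "u x \<in> {0..1}" "g x \<in> {0..1}" "k x \<in> {0..1}" if "x \<in> topspace X" for x
    using u(1) g(1) k(1) that by (auto simp: continuous_map_in_subtopology)
  have "continuous_map X euclideanreal h"
    using u(1) g(1) k(1) unfolding h_def continuous_map_in_subtopology
    by (intro continuous_intros) auto
  moreover have "h x0 = 0" "x0 \<noteq> y0 \<Longrightarrow> h y0 = 1"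
    by (simp_all add: h_def u(2,3) g(2) k(2))
  moreover have "{x \<in> topspace X. h x = 0} \<subseteq> {x \<in> topspace X. g x = 0}"
    "{x \<in> topspace X. h x = 1} \<subseteq> {x \<in> topspace X. k x = 0}"
    using interpolation_level_sets[OF range] by (auto simp: h_def)
  ultimately show ?thesis
    using that by blast
qed

theorem proposition2:
  fixes X :: "'a topology" and x0 y0 :: 'a
  assumes "tychonoff_space X"
    and "x0 \<in> topspace X" and "\<not> p_point X x0"
    and "y0 \<in> topspace X" and "\<not> p_point X y0"
  shows "\<exists>(Y :: real topology) f.
           tychonoff_space Y \<and> real_quotient_map X Y f \<and>
           (\<forall>U. openin (subtopology euclideanreal (topspace Y)) U \<longrightarrow> openin Y U) \<and>
           \<not> p_point Y (f x0) \<and> \<not> p_point Y (f y0) \<and>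
           (x0 \<noteq> y0 \<longrightarrow> f x0 < f y0)"
proof -
  have cr: "completely_regular_space X"
    using assms(1) by (simp add: tychonoff_space_def)
  obtain g :: "'a \<Rightarrow> real" where g: "continuous_map X (top_of_set {0..1}) g" "g x0 = 0"
    and g_not_nhd: "x0 \<notin> X interior_of {x \<in> topspace X. g x = 0}"
    using not_p_point_imp_zero_set[OF cr assms(2,3)] .
  obtain k :: "'a \<Rightarrow> real" where k: "continuous_map X (top_of_set {0..1}) k" "k y0 = 0"
    and k_not_nhd: "y0 \<notin> X interior_of {x \<in> topspace X. k x = 0}"
    using not_p_point_imp_zero_set[OF cr assms(4,5)] .
  obtain h where h: "continuous_map X euclideanreal h" "h x0 = 0" "x0 \<noteq> y0 \<Longrightarrow> h y0 = 1"
    and fibres: "{x \<in> topspace X. h x = 0} \<subseteq> {x \<in> topspace X. g x = 0}"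
      "{x \<in> topspace X. h x = 1} \<subseteq> {x \<in> topspace X. k x = 0}"
    using interpolate_zero_sets[OF assms(1,2,4) g k] by blast
  let ?Y = "real_quotient_topology X h"
  have x0: "\<not> p_point ?Y (h x0)"
    using not_p_point_real_quotient_topology[OF h(1) assms(2) _ g_not_nhd] fibres(1) h(2) by simp
  moreover have "\<not> p_point ?Y (h y0)"
  proof (cases "x0 = y0")
    case False
    then show ?thesis
      using not_p_point_real_quotient_topology[OF h(1) assms(4) _ k_not_nhd] fibres(2) h(3) by simp
  qed (use x0 in simp)
  ultimately show ?thesis
    using tychonoff_space_real_quotient_topology[OF h(1)] real_quotient_map_real_quotient_topology
      openin_real_quotient_topology[OF h(1)] h(2,3)
    by (intro exI[of _ ?Y] exI[of _ h]) auto
qed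

end
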